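(* For every $n\ge 2$, the sensitivity to synchronism of elementary cellular automaton rule $170$ satisfies $\mu(f_{170,n})=\dfrac{2^n-1}{3^n-2^{n+1}+2}$.
   Context: Cells are indexed by $\mathbb{Z}_n=\{0,\dots,n-1\}$, indices modulo $n$. Rule $170$ has local rule $r_{170}(x_1,x_2,x_3)=x_3$ and global function $f_{170,n}(x)_i=r_{170}(x_{i-1},x_i,x_{i+1})=x_{i+1}$. An update schedule is an ordered partition $\Delta=(\Delta_1,\dots,\Delta_k)$ of $\mathbb{Z}_n$ into nonempty blocks; $\mathcal{P}_n$ is the set of them. For a block $B$ let $f^{(B)}(x)_i=f_{170,n}(x)_i$ if $i\in B$ and $x_i$ otherwise; $f^{(\Delta)}_{170,n}=f^{(\Delta_k)}\circ\cdots\circ f^{(\Delta_1)}$. The dynamics of $\Delta$ is the transition digraph with arcs $(x,f^{(\Delta)}_{170,n}(x))$; $\mathcal{D}(f_{170,n})$ is the set of distinct dynamics over $\Delta\in\mathcal{P}_n$. The sensitivity to synchronism is $\mu(f_{170,n})=|\mathcal{D}(f_{170,n})|/(3^n-2^{n+1}+2)$. *)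

theory Defs
  imports Main "HOL.Real"
begin

definition configs :: "nat \<Rightarrow> (nat \<Rightarrow> bool) set" where
  "configs n = {x. \<forall>i. n \<le> i \<longrightarrow> \<not> x i}"

definition r170 :: "bool \<Rightarrow> bool \<Rightarrow> bool \<Rightarrow> bool" where
  "r170 x1 x2 x3 = x3"

definition f170 :: "nat \<Rightarrow> (nat \<Rightarrow> bool) \<Rightarrow> (nat \<Rightarrow> bool)" where
  "f170 n x i = (if i < n then r170 (x ((i + n - 1) mod n)) (x i) (x ((i + 1) mod n)) else False)"

definition block_update :: "nat \<Rightarrow> nat set \<Rightarrow> (nat \<Rightarrow> bool) \<Rightarrow> (nat \<Rightarrow> bool)" where
  "block_update n B x i = (if i \<in> B then f170 n x i else x i)"

definition ordered_partitions :: "nat \<Rightarrow> nat set list set" where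
  "ordered_partitions n = {D. (\<forall>i<length D. D ! i \<noteq> {})
      \<and> (\<forall>i<length D. \<forall>j<length D. i \<noteq> j \<longrightarrow> D ! i \<inter> D ! j = {})
      \<and> \<Union>(set D) = {0..<n}}"

text \<open>f^(Delta) = f^(Delta_k) o ... o f^(Delta_1): fold applies Delta_1 first.\<close>
definition schedule_update :: "nat \<Rightarrow> nat set list \<Rightarrow> (nat \<Rightarrow> bool) \<Rightarrow> (nat \<Rightarrow> bool)" where
  "schedule_update n D x = fold (\<lambda>B y. block_update n B y) D x"

text \<open>Dynamics: transition digraph on configs n, represented by its arc set.\<close>
definition dynamics :: "nat \<Rightarrow> nat set list \<Rightarrow> ((nat \<Rightarrow> bool) \<times> (nat \<Rightarrow> bool)) set" where
  "dynamics n D = {(x, schedule_update n D x) | x. x \<in> configs n}"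

definition dynamics_set :: "nat \<Rightarrow> ((nat \<Rightarrow> bool) \<times> (nat \<Rightarrow> bool)) set set" where
  "dynamics_set n = dynamics n ` ordered_partitions n"

definition sensitivity :: "nat \<Rightarrow> real" where
  "sensitivity n = real (card (dynamics_set n)) / ((3::real) ^ n - 2 ^ (n + 1) + 2)"

end

theory Submission
  imports Defs
begin

(* Let y be the image of x under a schedule D. Cell i reads the new value of its right neighbour
   exactly when i + 1 lies in a strictly earlier block than i; call the set S of such cells the
   cyclic descents of D. Then y i = y (i + 1) for i in S and y i = x (i + 1) otherwise, and since a
   cell of the earliest block is never a descent, S is a proper subset of the cells and this
   unrolls to y i = x (i + r + 1), where r is the distance from i to the first cell at or after i
   outside S. So the dynamics depends on S alone. Conversely every proper subset S arises (put
   cell i into block number r), and different S give different dynamics (feed in the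
   configuration with a single True at i + 1). Hence there are exactly 2^n - 1 dynamics. *)

(* Junk when S contains every cell, hence the witness j \<notin> S in the lemmas below. *)
definition run_length :: "nat \<Rightarrow> nat set \<Rightarrow> nat \<Rightarrow> nat" where
  "run_length n S i = (LEAST k. (i + k) mod n \<notin> S)"

lemma run_length_eq_0: "i < n \<Longrightarrow> i \<notin> S \<Longrightarrow> run_length n S i = 0"
  unfolding run_length_def by (rule Least_eq_0) simp

lemma run_length_exit:
  assumes "j < n" "j \<notin> S" "i < n"
  shows "(i + run_length n S i) mod n \<notin> S" and "run_length n S i < n"
proof -
  define k where "k = (j + n - i) mod n"
  have "(i + k) mod n = (i + (j + n - i)) mod n"
    unfolding k_def by (simp add: mod_add_right_eq)
  also have "\<dots> = j" using assms by simp
  finally have exit: "(i + k) mod n \<notin> S" using assms by simp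
  then show "(i + run_length n S i) mod n \<notin> S"
    unfolding run_length_def by (rule LeastI)
  have "run_length n S i \<le> k"
    unfolding run_length_def using exit by (rule Least_le)
  also have "k < n" unfolding k_def using assms by simp
  finally show "run_length n S i < n" .
qed

lemma run_length_Suc:
  assumes "j < n" "j \<notin> S" "i < n" "i \<in> S"
  shows "run_length n S i = Suc (run_length n S ((i + 1) mod n))"
proof -
  have "(i + run_length n S i) mod n \<notin> S" using run_length_exit(1)[OF assms(1-3)] .
  then have "run_length n S i = Suc (LEAST m. (i + Suc m) mod n \<notin> S)"
    unfolding run_length_def by (rule Least_Suc) (use assms(3,4) in simp)
  also have "(LEAST m. (i + Suc m) mod n \<notin> S) = run_length n S ((i + 1) mod n)"
    unfolding run_length_def by (simp add: mod_add_left_eq)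
  finally show ?thesis .
qed

lemma run_length_downward_closed:
  assumes "j < n" "j \<notin> S" "i < n" "t < run_length n S i"
  shows "\<exists>i'<n. run_length n S i' = t"
  using assms(3,4)
proof (induction "run_length n S i" arbitrary: i)
  case 0
  then show ?case by simp
next
  case (Suc k)
  have "i \<in> S" using Suc.hyps(2) Suc.prems(1) run_length_eq_0 by force
  then have k: "k = run_length n S ((i + 1) mod n)"
    using run_length_Suc[OF assms(1,2) Suc.prems(1)] Suc.hyps(2) by simp
  have i': "(i + 1) mod n < n" using Suc.prems(1) by simp
  show ?case
  proof (cases "t = k")
    case True
    then show ?thesis using k i' by blast
  next
    case False
    then show ?thesis using Suc.hyps(1)[OF k i'] Suc.prems(2) Suc.hyps(2) k by simp
  qed
qed

definition delayed_shift :: "nat \<Rightarrow> nat set \<Rightarrow> (nat \<Rightarrow> bool) \<Rightarrow> nat \<Rightarrow> bool" where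
  "delayed_shift n S x i = (if i < n then x ((i + run_length n S i + 1) mod n) else False)"

definition shift_dynamics :: "nat \<Rightarrow> nat set \<Rightarrow> ((nat \<Rightarrow> bool) \<times> (nat \<Rightarrow> bool)) set" where
  "shift_dynamics n S = {(x, delayed_shift n S x) | x. x \<in> configs n}"

lemma delayed_shift_unique:
  assumes j: "j < n" "j \<notin> S"
    and rec: "\<And>i. i < n \<Longrightarrow> y i = (if i \<in> S then y ((i + 1) mod n) else x ((i + 1) mod n))"
    and outside: "\<And>i. n \<le> i \<Longrightarrow> \<not> y i"
  shows "y = delayed_shift n S x"
proof
  fix i
  show "y i = delayed_shift n S x i"
  proof (cases "i < n")
    case True
    then show ?thesis
    proof (induction "run_length n S i" arbitrary: i)
      case 0
      then have "i \<notin> S" using run_length_exit(1)[OF j 0(2)] by simp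
      then show ?case using rec 0 by (simp add: delayed_shift_def)
    next
      case (Suc k)
      have "i \<in> S" using Suc.hyps(2) Suc.prems run_length_eq_0 by force
      then have k: "k = run_length n S ((i + 1) mod n)"
        using run_length_Suc[OF j Suc.prems] Suc.hyps(2) by simp
      have "y i = y ((i + 1) mod n)" using rec Suc.prems \<open>i \<in> S\<close> by simp
      also have "\<dots> = delayed_shift n S x ((i + 1) mod n)"
        using Suc.hyps(1)[OF k] Suc.prems by simp
      also have "\<dots> = x (((i + 1) mod n + (k + 1)) mod n)"
        using Suc.prems k by (simp add: delayed_shift_def)
      also have "\<dots> = delayed_shift n S x i"
        using Suc.prems Suc.hyps(2) by (simp add: delayed_shift_def mod_add_left_eq)
      finally show ?case .
    qed
  next
    case False
    then show ?thesis using outside by (simp add: delayed_shift_def)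
  qed
qed

lemma delayed_shift_indicator:
  assumes "j < n" "j \<notin> S" "i < n"
  shows "delayed_shift n S (\<lambda>k. k = (i + 1) mod n) i \<longleftrightarrow> i \<notin> S"
proof (cases "i \<in> S")
  case True
  define r where "r = run_length n S i"
  have exit: "(i + r) mod n \<notin> S" and "r < n"
    using run_length_exit[OF assms] unfolding r_def by simp_all
  moreover have "r \<noteq> 0"
  proof
    assume "r = 0"
    then show False using exit True assms(3) by simp
  qed
  ultimately have "\<not> n dvd r" by (auto dest: nat_dvd_not_less)
  then have "(i + 1 + r) mod n \<noteq> (i + 1) mod n"
    using mod_eq_dvd_iff_nat[of "i + 1" "i + 1 + r" n] by auto
  then show ?thesis using True assms(3) by (simp add: delayed_shift_def r_def add_ac)
next
  case False
  then show ?thesis using assms(3) by (simp add: delayed_shift_def run_length_eq_0)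
qed

lemma inj_on_shift_dynamics: "inj_on (shift_dynamics n) {S. S \<subset> {0..<n}}"
proof (rule inj_onI)
  fix S T
  assume S: "S \<in> {S. S \<subset> {0..<n}}" and T: "T \<in> {S. S \<subset> {0..<n}}"
    and eq: "shift_dynamics n S = shift_dynamics n T"
  obtain jS where jS: "jS < n" "jS \<notin> S" using psubset_imp_ex_mem[of S "{0..<n}"] S by auto
  obtain jT where jT: "jT < n" "jT \<notin> T" using psubset_imp_ex_mem[of T "{0..<n}"] T by auto
  have same: "delayed_shift n S x = delayed_shift n T x" if "x \<in> configs n" for x
    using eq that unfolding shift_dynamics_def by blast
  have "i \<in> S \<longleftrightarrow> i \<in> T" for i
  proof (cases "i < n")
    case True
    then have "(i + 1) mod n < n" by simp
    then have "(\<lambda>k. k = (i + 1) mod n) \<in> configs n" by (auto simp: configs_def)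
    then show ?thesis
      using same delayed_shift_indicator[OF jS True] delayed_shift_indicator[OF jT True] by metis
  next
    case False
    then show ?thesis using S T by auto
  qed
  then show "S = T" by blast
qed

definition block_index :: "nat set list \<Rightarrow> nat \<Rightarrow> nat" where
  "block_index D j = (THE t. t < length D \<and> j \<in> D ! t)"

definition cyclic_descents :: "nat \<Rightarrow> nat set list \<Rightarrow> nat set" where
  "cyclic_descents n D = {i. i < n \<and> block_index D ((i + 1) mod n) < block_index D i}"

lemma block_index_eq:
  assumes D: "D \<in> ordered_partitions n" and "t < length D" "j \<in> D ! t"
  shows "block_index D j = t"
  unfolding block_index_def
proof (rule the_equality)
  fix t' assume "t' < length D \<and> j \<in> D ! t'"
  then show "t' = t" using assms unfolding ordered_partitions_def by blast
qed (use assms in simp)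

lemma block_index_mem:
  assumes D: "D \<in> ordered_partitions n" and "j < n"
  shows "block_index D j < length D" and "j \<in> D ! block_index D j"
proof -
  have "j \<in> \<Union> (set D)" using D \<open>j < n\<close> unfolding ordered_partitions_def by simp
  then obtain t where "t < length D" "j \<in> D ! t" by (auto simp: in_set_conv_nth)
  then show "block_index D j < length D" "j \<in> D ! block_index D j"
    using block_index_eq[OF D] by simp_all
qed

lemma f170_apply: "i < n \<Longrightarrow> f170 n x i = x ((i + 1) mod n)"
  by (simp add: f170_def r170_def)

lemma schedule_update_configs:
  "x \<in> configs n \<Longrightarrow> schedule_update n D x \<in> configs n"
  unfolding schedule_update_def
  by (induction D arbitrary: x) (auto simp: configs_def block_update_def f170_def)

lemma schedule_update_take:
  assumes D: "D \<in> ordered_partitions n" and "m \<le> length D" "i < n"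
  shows "schedule_update n (take m D) x i =
    (if block_index D i < m then
       (if block_index D ((i + 1) mod n) < block_index D i
        then schedule_update n (take m D) x ((i + 1) mod n) else x ((i + 1) mod n))
     else x i)"
  using assms(2,3)
proof (induction m arbitrary: i)
  case 0
  then show ?case by (simp add: schedule_update_def)
next
  case (Suc m)
  let ?z = "schedule_update n (take m D) x"
  have step: "schedule_update n (take (Suc m) D) x = block_update n (D ! m) ?z"
    using Suc.prems by (simp add: schedule_update_def take_Suc_conv_app_nth)
  have "i' \<in> D ! m \<longleftrightarrow> block_index D i' = m" if "i' < n" for i'
    using block_index_mem[OF D that] block_index_eq[OF D, of m i'] Suc.prems(1) by auto
  then have upd: "block_update n (D ! m) ?z i' =
      (if block_index D i' = m then ?z ((i' + 1) mod n) else ?z i')" if "i' < n" for i'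
    using that by (simp add: block_update_def f170_apply)
  have next_cell: "(i + 1) mod n < n" using Suc.prems(2) by simp
  have m: "m \<le> length D" using Suc.prems(1) by simp
  show ?case
    unfolding step
    using upd[OF Suc.prems(2)] upd[OF next_cell]
      Suc.IH[OF m Suc.prems(2)] Suc.IH[OF m next_cell]
    by (auto simp: less_Suc_eq)
qed

lemma schedule_update_rec:
  assumes "D \<in> ordered_partitions n" "i < n"
  shows "schedule_update n D x i = (if i \<in> cyclic_descents n D
    then schedule_update n D x ((i + 1) mod n) else x ((i + 1) mod n))"
proof -
  have "block_index D i < length D" using block_index_mem(1)[OF assms] .
  then show ?thesis
    using schedule_update_take[OF assms(1) order_refl assms(2), of x] assms(2)
    unfolding cyclic_descents_def take_all[OF order_refl]
    by (simp only: mem_Collect_eq simp_thms if_True)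
qed

lemma cyclic_descents_psubset:
  assumes D: "D \<in> ordered_partitions n" and "0 < n"
  shows "cyclic_descents n D \<subset> {0..<n}"
proof -
  define M where "M = Min (block_index D ` {0..<n})"
  have "M \<in> block_index D ` {0..<n}" unfolding M_def using \<open>0 < n\<close> by (intro Min_in) auto
  then obtain j where j: "j < n" "block_index D j = M" by auto
  have "(j + 1) mod n < n" using \<open>0 < n\<close> by simp
  then have "M \<le> block_index D ((j + 1) mod n)" unfolding M_def by (intro Min_le) auto
  then have "j \<notin> cyclic_descents n D" using j(2) by (simp add: cyclic_descents_def)
  moreover have "cyclic_descents n D \<subseteq> {0..<n}" by (auto simp: cyclic_descents_def)
  moreover have "j \<in> {0..<n}" using j(1) by simp
  ultimately show ?thesis by blast
qed

lemma dynamics_eq_shift_dynamics: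
  assumes D: "D \<in> ordered_partitions n" and "0 < n"
  shows "dynamics n D = shift_dynamics n (cyclic_descents n D)"
proof -
  obtain j where j: "j < n" "j \<notin> cyclic_descents n D"
    using psubset_imp_ex_mem[OF cyclic_descents_psubset[OF assms]] by auto
  have "schedule_update n D x = delayed_shift n (cyclic_descents n D) x" if "x \<in> configs n" for x
  proof (rule delayed_shift_unique[OF j schedule_update_rec[OF D]])
    show "\<not> schedule_update n D x i" if "n \<le> i" for i
      using schedule_update_configs[OF \<open>x \<in> configs n\<close>] that by (simp add: configs_def)
  qed
  then show ?thesis unfolding dynamics_def shift_dynamics_def by auto
qed

definition level_partition :: "nat \<Rightarrow> (nat \<Rightarrow> nat) \<Rightarrow> nat set list" where
  "level_partition n c = map (\<lambda>t. {j. j < n \<and> c j = t}) [0..<Suc (Max (c ` {0..<n}))]"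

lemma length_level_partition: "length (level_partition n c) = Suc (Max (c ` {0..<n}))"
  by (simp add: level_partition_def)

lemma nth_level_partition:
  "t \<le> Max (c ` {0..<n}) \<Longrightarrow> level_partition n c ! t = {j. j < n \<and> c j = t}"
  by (simp add: level_partition_def del: upt_Suc)

lemma level_partition_in_ordered_partitions:
  assumes "0 < n" and down: "\<And>j t. j < n \<Longrightarrow> t < c j \<Longrightarrow> \<exists>j'<n. c j' = t"
  shows "level_partition n c \<in> ordered_partitions n"
proof -
  define M where "M = Max (c ` {0..<n})"
  have "M \<in> c ` {0..<n}" unfolding M_def using \<open>0 < n\<close> by (intro Max_in) auto
  then obtain jM where jM: "jM < n" "c jM = M" by auto
  have le_M: "c j \<le> M" if "j < n" for j
    unfolding M_def using that by (intro Max_ge) auto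
  have len: "length (level_partition n c) = Suc M"
    unfolding M_def by (rule length_level_partition)
  have nth: "level_partition n c ! t = {j. j < n \<and> c j = t}" if "t \<le> M" for t
    using that unfolding M_def by (rule nth_level_partition)
  show ?thesis
    unfolding ordered_partitions_def
  proof (intro CollectI conjI allI impI)
    fix t assume "t < length (level_partition n c)"
    then have "t \<le> M" using len by simp
    then have "\<exists>j<n. c j = t" using jM down[OF jM(1)] by (cases "t = M") auto
    then show "level_partition n c ! t \<noteq> {}" using nth \<open>t \<le> M\<close> by auto
  next
    fix t t' assume "t < length (level_partition n c)" "t' < length (level_partition n c)" "t \<noteq> t'"
    then show "level_partition n c ! t \<inter> level_partition n c ! t' = {}"
      using nth len by auto
  next
    have "set (level_partition n c) = (\<lambda>t. {j. j < n \<and> c j = t}) ` {0..<Suc M}"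
      by (simp add: level_partition_def M_def del: upt_Suc)
    then show "\<Union> (set (level_partition n c)) = {0..<n}"
      using le_M by (auto simp: less_Suc_eq_le)
  qed
qed

lemma block_index_level_partition:
  assumes "0 < n" and down: "\<And>j t. j < n \<Longrightarrow> t < c j \<Longrightarrow> \<exists>j'<n. c j' = t"
    and "j < n"
  shows "block_index (level_partition n c) j = c j"
proof -
  have le_Max: "c j \<le> Max (c ` {0..<n})" using \<open>j < n\<close> by (intro Max_ge) auto
  have D: "level_partition n c \<in> ordered_partitions n"
    using level_partition_in_ordered_partitions[OF assms(1,2)] .
  show ?thesis
    using block_index_eq[OF D, of "c j" j]
      nth_level_partition[OF le_Max] le_Max \<open>j < n\<close>
    by (simp add: length_level_partition)
qed

lemma cyclic_descents_surj:
  assumes "0 < n" "S \<subset> {0..<n}"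
  shows "\<exists>D \<in> ordered_partitions n. cyclic_descents n D = S"
proof -
  obtain j where j: "j < n" "j \<notin> S" using psubset_imp_ex_mem[OF assms(2)] by auto
  let ?D = "level_partition n (run_length n S)"
  have D: "?D \<in> ordered_partitions n"
    using level_partition_in_ordered_partitions[OF assms(1) run_length_downward_closed[OF j]] .
  have idx: "block_index ?D i = run_length n S i" if "i < n" for i
    using block_index_level_partition[OF assms(1) run_length_downward_closed[OF j] that] .
  have descent_iff: "i \<in> cyclic_descents n ?D \<longleftrightarrow>
      i < n \<and> run_length n S ((i + 1) mod n) < run_length n S i" for i
    using idx assms(1) by (auto simp: cyclic_descents_def)
  have "i \<in> cyclic_descents n ?D \<longleftrightarrow> i \<in> S" for i
  proof (cases "i < n \<and> i \<in> S")
    case True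
    then show ?thesis using descent_iff run_length_Suc[OF j] by simp
  next
    case False
    then show ?thesis using descent_iff run_length_eq_0 assms(2) by auto
  qed
  then show ?thesis using D by blast
qed

lemma card_dynamics_set:
  assumes "0 < n"
  shows "card (dynamics_set n) = 2 ^ n - 1"
proof -
  have "dynamics_set n = shift_dynamics n ` cyclic_descents n ` ordered_partitions n"
    unfolding dynamics_set_def image_image
    using dynamics_eq_shift_dynamics[OF _ assms] by (intro image_cong) auto
  also have "cyclic_descents n ` ordered_partitions n = {S. S \<subset> {0..<n}}"
    using cyclic_descents_psubset[OF _ assms] cyclic_descents_surj[OF assms] by blast
  finally have "card (dynamics_set n) = card {S. S \<subset> {0..<n}}"
    using inj_on_shift_dynamics card_image by metis
  also have "{S. S \<subset> {0..<n}} = Pow {0..<n} - {{0..<n}}" by auto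
  also have "card \<dots> = 2 ^ n - 1" by (simp add: card_Diff_singleton card_Pow)
  finally show ?thesis .
qed

theorem mainTheorem3:
  fixes n :: nat
  assumes "n \<ge> 2"
  shows "sensitivity n = ((2::real) ^ n - 1) / ((3::real) ^ n - 2 ^ (n + 1) + 2)"
proof -
  have "real (card (dynamics_set n)) = 2 ^ n - 1"
    using card_dynamics_set[of n] assms by simp
  then show ?thesis unfolding sensitivity_def by simp
qed

end
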